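(* (1) Every nonempty compact metric space $X$ admits a peripheral extension. (2) Any two peripheral extensions of a nonempty compact metric space $X$ are homeomorphic via a homeomorphism that is the identity on $X$. (3) Given a peripheral extension $K$ of $X$, the group of homeomorphisms of $K$ that are the identity on $X$ acts transitively on the set $P$ of peripheral points of $K$.
   Context: Let $P$ be a countably infinite discrete space. A peripheral extension of a compact metric space $X$ is a compact metric space $K$ containing $P$ as an open dense subspace such that $K\setminus P$ is homeomorphic to $X$ (identified with $X$); the points of $P$ are the peripheral points. *)

theory Defs
  imports "HOL-Analysis.Analysis"
begin

definition peripheral_extension ::
  "'a topology \<Rightarrow> 'b topology \<Rightarrow> 'b set \<Rightarrow> ('a \<Rightarrow> 'b) \<Rightarrow> bool" where
  "peripheral_extension X K P e \<longleftrightarrow>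
     metrizable_space K \<and> compact_space K \<and>
     P \<subseteq> topspace K \<and> countable P \<and> infinite P \<and>
     subtopology K P = discrete_topology P \<and>
     openin K P \<and> K closure_of P = topspace K \<and>
     homeomorphic_map X (subtopology K (topspace K - P)) e"

end

theory Submission
  imports Defs "HOL-Combinatorics.Transposition"
begin

(* Existence: adjoin to X isolated points Inr n, hovering at height 1/(n+1) above the points
   s n of a sequence that clusters at every point of X.

   Uniqueness: in a peripheral extension every point y has a nearest point in X and a gap, its
   distance to X. Only finitely many peripheral points have gap at least \<epsilon>, and infinitely many
   peripheral points lie over every neighbourhood of every point of X. A back-and-forth argument
   therefore yields a bijection between the peripheral points of two extensions which matches p
   with q only if their nearest points are closer than the larger of their gaps. Extended by the
   identity of X it is continuous, hence a homeomorphism of compact Hausdorff spaces.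

   Transitivity: peripheral points are isolated, so swapping two of them is a homeomorphism. *)

section \<open>Back-and-forth matchings\<close>

definition partial_matching ::
  "('p \<Rightarrow> 'q \<Rightarrow> bool) \<Rightarrow> 'p set \<Rightarrow> 'q set \<Rightarrow> ('p \<times> 'q) set \<Rightarrow> bool" where
  "partial_matching good A B R \<longleftrightarrow> finite R \<and> R \<subseteq> A \<times> B \<and> (\<forall>(p,q)\<in>R. good p q) \<and>
     (\<forall>(p,q)\<in>R. \<forall>(p',q')\<in>R. p = p' \<longleftrightarrow> q = q')"

lemma partial_matching_converse:
  "partial_matching good A B R \<Longrightarrow> partial_matching (\<lambda>q p. good p q) B A (R\<inverse>)"
  unfolding partial_matching_def by auto

lemma partial_matching_extend_Domain:
  assumes R: "partial_matching good A B R" and p: "p \<in> A"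
    and forward: "\<And>p F. p \<in> A \<Longrightarrow> finite F \<Longrightarrow> \<exists>q\<in>B - F. good p q"
  shows "\<exists>R'. partial_matching good A B R' \<and> R \<subseteq> R' \<and> p \<in> Domain R'"
proof (cases "p \<in> Domain R")
  case True
  then show ?thesis using R by blast
next
  case False
  have "finite (Range R)" using R unfolding partial_matching_def by (simp add: finite_Range)
  then obtain q where "q \<in> B" "q \<notin> Range R" "good p q" using forward[OF p] by blast
  then have "partial_matching good A B (insert (p,q) R)"
    using R p False unfolding partial_matching_def by (auto simp: Domain.simps Range.simps)
  then show ?thesis by blast
qed

lemma partial_matching_extend:
  assumes R: "partial_matching good A B R" and "p \<in> A" "q \<in> B"
    and forward: "\<And>p F. p \<in> A \<Longrightarrow> finite F \<Longrightarrow> \<exists>q\<in>B - F. good p q"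
    and backward: "\<And>q F. q \<in> B \<Longrightarrow> finite F \<Longrightarrow> \<exists>p\<in>A - F. good p q"
  shows "\<exists>R'. partial_matching good A B R' \<and> R \<subseteq> R' \<and> p \<in> Domain R' \<and> q \<in> Range R'"
proof -
  obtain R1 where R1: "partial_matching good A B R1" "R \<subseteq> R1" "p \<in> Domain R1"
    using partial_matching_extend_Domain[OF R \<open>p \<in> A\<close> forward] by blast
  obtain R2 where R2: "partial_matching (\<lambda>q p. good p q) B A R2" "R1\<inverse> \<subseteq> R2" "q \<in> Domain R2"
    using partial_matching_extend_Domain[OF partial_matching_converse[OF R1(1)] \<open>q \<in> B\<close>] backward
    by blast
  have "partial_matching good A B (R2\<inverse>)"
    using partial_matching_converse[OF R2(1)] by simp
  moreover have "R \<subseteq> R2\<inverse>" "p \<in> Domain (R2\<inverse>)" "q \<in> Range (R2\<inverse>)"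
    using R1(2,3) R2(2,3) by auto
  ultimately show ?thesis by blast
qed

lemma bij_betw_from_relation:
  assumes "Domain U = A" "Range U = B"
    and functional: "\<And>p q p' q'. (p,q) \<in> U \<Longrightarrow> (p',q') \<in> U \<Longrightarrow> p = p' \<longleftrightarrow> q = q'"
  obtains f where "bij_betw f A B" "\<And>p. p \<in> A \<Longrightarrow> (p, f p) \<in> U"
proof
  define f where "f p = (SOME q. (p,q) \<in> U)" for p
  show fU: "(p, f p) \<in> U" if "p \<in> A" for p
    unfolding f_def using assms(1) that by (metis Domain_iff someI_ex)
  show "bij_betw f A B"
  proof (rule bij_betw_imageI)
    show "inj_on f A" using fU functional by (meson inj_onI)
    show "f ` A = B"
      using fU functional assms(1,2) by (auto simp: image_iff) (metis Domain.DomainI)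
  qed
qed

lemma partial_matching_chain:
  fixes a :: "nat \<Rightarrow> 'p" and b :: "nat \<Rightarrow> 'q"
  assumes "\<And>n. a n \<in> A" "\<And>n. b n \<in> B"
    and forward: "\<And>p F. p \<in> A \<Longrightarrow> finite F \<Longrightarrow> \<exists>q\<in>B - F. good p q"
    and backward: "\<And>q F. q \<in> B \<Longrightarrow> finite F \<Longrightarrow> \<exists>p\<in>A - F. good p q"
  obtains R where "mono R" "\<And>n. partial_matching good A B (R n)"
    "\<And>n. a n \<in> Domain (R (Suc n))" "\<And>n. b n \<in> Range (R (Suc n))"
proof -
  define next_matching where "next_matching R n =
    (SOME R'. partial_matching good A B R' \<and> R \<subseteq> R' \<and> a n \<in> Domain R' \<and> b n \<in> Range R')"
    for R n
  have next_matching: "partial_matching good A B (next_matching R n) \<and> R \<subseteq> next_matching R n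
      \<and> a n \<in> Domain (next_matching R n) \<and> b n \<in> Range (next_matching R n)"
    if "partial_matching good A B R" for R n
    unfolding next_matching_def
    by (rule someI_ex, rule partial_matching_extend[OF that assms(1,2) forward backward])
  define R where "R = rec_nat {} (\<lambda>n R. next_matching R n)"
  have R_Suc: "R (Suc n) = next_matching (R n) n" for n
    by (simp add: R_def)
  have R: "partial_matching good A B (R n)" for n
  proof (induction n)
    case 0
    then show ?case by (simp add: R_def partial_matching_def)
  next
    case (Suc n)
    then show ?case by (simp add: R_Suc next_matching)
  qed
  show ?thesis
  proof (rule that[of R])
    show "mono R"
      using next_matching[OF R] unfolding mono_iff_le_Suc by (simp add: R_Suc)
    show "a n \<in> Domain (R (Suc n))" "b n \<in> Range (R (Suc n))" for n
      using next_matching[OF R, of n] by (simp_all add: R_Suc)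
  qed (rule R)
qed

lemma partial_matching_Union_chain:
  fixes R :: "nat \<Rightarrow> ('p \<times> 'q) set"
  assumes "mono R" "\<And>n. partial_matching good A B (R n)"
    and "(p,q) \<in> (\<Union>n. R n)" "(p',q') \<in> (\<Union>n. R n)"
  shows "p = p' \<longleftrightarrow> q = q'"
proof -
  obtain m n where mn: "(p,q) \<in> R m" "(p',q') \<in> R n"
    using assms(3,4) by blast
  have "R m \<subseteq> R (max m n)" "R n \<subseteq> R (max m n)"
    using \<open>mono R\<close> by (simp_all add: monoD)
  with mn have "(p,q) \<in> R (max m n)" "(p',q') \<in> R (max m n)"
    by blast+
  then show ?thesis
    using assms(2)[of "max m n"] unfolding partial_matching_def by blast
qed

lemma back_and_forth:
  assumes "countable A" "countable B" "A \<noteq> {}" "B \<noteq> {}"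
    and forward: "\<And>p F. p \<in> A \<Longrightarrow> finite F \<Longrightarrow> \<exists>q\<in>B - F. good p q"
    and backward: "\<And>q F. q \<in> B \<Longrightarrow> finite F \<Longrightarrow> \<exists>p\<in>A - F. good p q"
  obtains f where "bij_betw f A B" "\<And>p. p \<in> A \<Longrightarrow> good p (f p)"
proof -
  define a where "a = from_nat_into A"
  define b where "b = from_nat_into B"
  have ab: "\<And>n. a n \<in> A" "\<And>n. b n \<in> B"
    using assms(3,4) by (simp_all add: a_def b_def from_nat_into)
  obtain R where R: "mono R" "\<And>n. partial_matching good A B (R n)"
    "\<And>n. a n \<in> Domain (R (Suc n))" "\<And>n. b n \<in> Range (R (Suc n))"
    using partial_matching_chain[where a=a and b=b, OF ab forward backward] by blast
  define U where "U = (\<Union>n. R n)"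
  have R_subset: "R n \<subseteq> A \<times> B" and R_good: "(p,q) \<in> R n \<Longrightarrow> good p q" for n p q
    using R(2)[of n] unfolding partial_matching_def by auto
  have "U \<subseteq> A \<times> B"
    using R_subset unfolding U_def by blast
  have U_good: "good p q" if pq: "(p,q) \<in> U" for p q
  proof -
    obtain n where "(p,q) \<in> R n"
      using pq unfolding U_def by blast
    then show ?thesis
      by (rule R_good)
  qed
  have "R n \<subseteq> U" for n
    unfolding U_def by blast
  then have "range a \<subseteq> Domain U" "range b \<subseteq> Range U"
    using R(3,4) by (meson Domain_mono Range_mono image_subsetI subsetD)+
  moreover have "range a = A" "range b = B"
    using assms(1-4) by (simp_all add: a_def b_def)
  ultimately have dom: "Domain U = A" and ran: "Range U = B"
    using \<open>U \<subseteq> A \<times> B\<close> by auto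
  have functional: "p = p' \<longleftrightarrow> q = q'" if "(p,q) \<in> U" "(p',q') \<in> U" for p q p' q'
    using partial_matching_Union_chain[OF R(1,2)] that by (simp add: U_def)
  obtain f where f: "bij_betw f A B" "\<And>p. p \<in> A \<Longrightarrow> (p, f p) \<in> U"
    using bij_betw_from_relation[OF dom ran functional] by blast
  show ?thesis
    by (rule that[of f]) (use f U_good in auto)
qed

lemma homeomorphic_map_transpose_isolated:
  assumes "t1_space K" "openin K {p}" "openin K {q}"
  shows "homeomorphic_map K K (Transposition.transpose p q)"
proof (rule homeomorphic_map_involution)
  have pq: "p \<in> topspace K" "q \<in> topspace K"
    using assms(2,3) openin_subset by blast+
  have "closedin K {p,q}"
    using assms(1) pq by (simp add: t1_space_closedin_finite)
  show "continuous_map K K (Transposition.transpose p q)"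
    unfolding continuous_map_def
  proof (intro conjI allI impI)
    show "Transposition.transpose p q \<in> topspace K \<rightarrow> topspace K"
      using pq by (auto simp: Transposition.transpose_def)
    fix U assume U: "openin K U"
    have preimage: "{x \<in> topspace K. Transposition.transpose p q x \<in> U} =
        (U - {p,q}) \<union> (if q \<in> U then {p} else {}) \<union> (if p \<in> U then {q} else {})"
      using openin_subset[OF U] pq by (auto simp: Transposition.transpose_def)
    have "openin K (U - {p,q})"
      using U \<open>closedin K {p,q}\<close> by (rule openin_diff)
    then show "openin K {x \<in> topspace K. Transposition.transpose p q x \<in> U}"
      unfolding preimage by (intro openin_Un) (simp_all add: assms(2,3))
  qed
qed simp

lemma compact_space_if_compactin_cofinite:
  assumes "compactin K A" and cofinite: "\<And>U. openin K U \<Longrightarrow> A \<subseteq> U \<Longrightarrow> finite (topspace K - U)"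
  shows "compact_space K"
  unfolding compact_space_def compactin_def
proof (intro conjI allI impI)
  fix \<U> assume \<U>: "(\<forall>U\<in>\<U>. openin K U) \<and> topspace K \<subseteq> \<Union>\<U>"
  moreover have "A \<subseteq> \<Union>\<U>"
    using \<U> compactin_subset_topspace[OF assms(1)] by blast
  ultimately obtain \<V> where \<V>: "finite \<V>" "\<V> \<subseteq> \<U>" "A \<subseteq> \<Union>\<V>"
    using assms(1) unfolding compactin_def by meson
  have "finite (topspace K - \<Union>\<V>)"
    using \<U> \<V> by (intro cofinite) auto
  have "\<forall>x\<in>topspace K - \<Union>\<V>. \<exists>U. U \<in> \<U> \<and> x \<in> U"
    using \<U> by blast
  then obtain g where g: "\<forall>x\<in>topspace K - \<Union>\<V>. g x \<in> \<U> \<and> x \<in> g x"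
    by (rule bchoice[elim_format]) blast
  show "\<exists>\<F>. finite \<F> \<and> \<F> \<subseteq> \<U> \<and> topspace K \<subseteq> \<Union>\<F>"
  proof (intro exI conjI)
    show "finite (\<V> \<union> g ` (topspace K - \<Union>\<V>))"
      using \<V>(1) \<open>finite (topspace K - \<Union>\<V>)\<close> by blast
    show "\<V> \<union> g ` (topspace K - \<Union>\<V>) \<subseteq> \<U>"
      using \<V>(2) g by blast
    show "topspace K \<subseteq> \<Union>(\<V> \<union> g ` (topspace K - \<Union>\<V>))"
      using g by blast
  qed
qed simp

lemma (in Metric_space) mball_disjoint_finite:
  assumes "finite F" "a \<in> M" "a \<notin> F"
  obtains r where "r > 0" "mball a r \<inter> F = {}"
proof -
  have "closedin mtopology (M \<inter> F)"
    using t1_space_mtopology assms(1) by (simp add: t1_space_closedin_finite)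
  then have "openin mtopology (topspace mtopology - M \<inter> F)"
    by (rule openin_diff[OF openin_topspace])
  moreover have "topspace mtopology - M \<inter> F = M - F"
    by auto
  ultimately have "openin mtopology (M - F)"
    by simp
  moreover have "a \<in> M - F"
    using assms(2,3) by blast
  ultimately obtain r where "r > 0" "mball a r \<subseteq> M - F"
    unfolding openin_mtopology by blast
  then show ?thesis
    using that by blast
qed

lemma inverse_Suc_eventually_less:
  assumes "(r::real) > 0"
  obtains N where "\<And>n. n \<ge> N \<Longrightarrow> 1 / (real n + 1) < r"
proof -
  obtain N where N: "inverse (real (Suc N)) < r"
    using reals_Archimedean assms by blast
  have "1 / (real n + 1) < r" if "n \<ge> N" for n
  proof -
    have "1 / (real n + 1) \<le> inverse (real (Suc N))"
      using that by (simp add: divide_simps)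
    with N show ?thesis
      by linarith
  qed
  with that show ?thesis
    by blast
qed

text \<open>Enumerate, with repetitions, finite \<open>1/(k+1)\<close>-nets for all k.\<close>

lemma (in Metric_space) compact_space_imp_cluster_sequence:
  assumes "compact_space mtopology" "M \<noteq> {}"
  obtains s :: "nat \<Rightarrow> 'a"
  where "\<And>n. s n \<in> M" "\<And>x \<epsilon> N. x \<in> M \<Longrightarrow> \<epsilon> > 0 \<Longrightarrow> \<exists>n\<ge>N. d x (s n) < \<epsilon>"
proof -
  have "mtotally_bounded M"
    using assms(1) compactin_imp_mtotally_bounded unfolding compact_space_def by simp
  then have "\<forall>k. \<exists>C. finite C \<and> C \<subseteq> M \<and> M \<subseteq> (\<Union>x\<in>C. mball x (1 / (real k + 1)))"
    unfolding mtotally_bounded_def by (simp add: add_pos_nonneg)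
  then obtain C where C: "\<And>k. finite (C k)" "\<And>k. C k \<subseteq> M"
    "\<And>k. M \<subseteq> (\<Union>x\<in>C k. mball x (1 / (real k + 1)))"
    by metis
  have C_nonempty: "C k \<noteq> {}" for k
    using C(3)[of k] assms(2) by auto
  define s where "s n = from_nat_into (C (fst (prod_decode n))) (snd (prod_decode n))" for n
  have "s n \<in> M" for n
    using from_nat_into[OF C_nonempty] C(2) unfolding s_def by blast
  moreover have "\<exists>n\<ge>N. d x (s n) < \<epsilon>" if x: "x \<in> M" and "\<epsilon> > 0" for x \<epsilon> N
  proof -
    obtain N0 where N0: "\<And>n. n \<ge> N0 \<Longrightarrow> 1 / (real n + 1) < \<epsilon>"
      using inverse_Suc_eventually_less \<open>\<epsilon> > 0\<close> by blast
    define k where "k = max N N0"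
    obtain z where z: "z \<in> C k" "x \<in> mball z (1 / (real k + 1))"
      using C(3)[of k] x by blast
    obtain j where j: "from_nat_into (C k) j = z"
      using range_from_nat_into[OF C_nonempty countable_finite[OF C(1)]] z(1) by (metis imageE)
    have "s (prod_encode (k, j)) = z"
      using j by (simp add: s_def)
    moreover have "prod_encode (k, j) \<ge> N"
      using le_prod_encode_1[of k j] by (simp add: k_def)
    moreover have "d x z < \<epsilon>"
      using z(2) N0[of k] by (simp add: k_def commute)
    ultimately show ?thesis
      by metis
  qed
  ultimately show ?thesis
    using that by blast
qed

lemma peripheral_extension_openin_singleton:
  assumes "peripheral_extension X K P e" "p \<in> P"
  shows "openin K {p}"
proof -
  have "subtopology K P = discrete_topology P" "openin K P"
    using assms(1) unfolding peripheral_extension_def by simp_all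
  then have "openin (subtopology K P) {p}"
    using assms(2) by simp
  then show ?thesis
    using openin_trans_full \<open>openin K P\<close> by blast
qed

lemma peripheral_extension_image:
  assumes "peripheral_extension X K P e"
  shows "e ` topspace X = topspace K - P"
proof -
  have "e ` topspace X = topspace (subtopology K (topspace K - P))"
    using assms homeomorphic_imp_surjective_map unfolding peripheral_extension_def by blast
  then show ?thesis
    by auto
qed

lemma peripheral_extension_transitive:
  assumes "peripheral_extension X K P e" "p \<in> P" "q \<in> P"
  shows "\<exists>h. homeomorphic_map K K h \<and> (\<forall>x\<in>topspace X. h (e x) = e x) \<and> h p = q"
proof (intro exI conjI ballI)
  have "t1_space K"
    using assms(1) metrizable_imp_Hausdorff_space Hausdorff_imp_t1_space
    unfolding peripheral_extension_def by blast
  then show "homeomorphic_map K K (Transposition.transpose p q)"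
    using peripheral_extension_openin_singleton[OF assms(1)] assms(2,3)
    by (simp add: homeomorphic_map_transpose_isolated)
  show "Transposition.transpose p q (e x) = e x" if "x \<in> topspace X" for x
    using peripheral_extension_image[OF assms(1)] that assms(2,3)
    by (metis Diff_iff image_eqI transpose_apply_other)
  show "Transposition.transpose p q p = q"
    by simp
qed

section \<open>Nearest points and gaps\<close>

locale metric_peripheral_extension =
  K: Metric_space M d + X: Metric_space MX dX
  for M :: "'b set" and d and MX :: "'a set" and dX +
  fixes P :: "'b set" and e :: "'a \<Rightarrow> 'b"
  assumes peripheral_extension: "peripheral_extension X.mtopology K.mtopology P e"
    and compact_X: "compact_space X.mtopology" and nonempty_X: "MX \<noteq> {}"
begin

lemma P_subset: "P \<subseteq> M"
  and countable_P: "countable P" and infinite_P: "infinite P"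
  and closure_P: "K.mtopology closure_of P = M"
  and compact_K: "compact_space K.mtopology"
  and homeomorphic_e: "homeomorphic_map X.mtopology (subtopology K.mtopology (M - P)) e"
  using peripheral_extension unfolding peripheral_extension_def by simp_all

lemma image_e: "e ` MX = M - P"
  using peripheral_extension_image[OF peripheral_extension] by simp

lemma e_in_M: "x \<in> MX \<Longrightarrow> e x \<in> M" and e_notin_P: "x \<in> MX \<Longrightarrow> e x \<notin> P"
  using image_e by auto

lemma inj_e: "inj_on e MX"
  using homeomorphic_imp_injective_map[OF homeomorphic_e] by simp

lemma continuous_map_e: "continuous_map X.mtopology K.mtopology e"
  using homeomorphic_imp_continuous_map[OF homeomorphic_e] continuous_map_in_subtopology by blast

lemma e_continuous_at:
  assumes "x \<in> MX" "\<epsilon> > 0"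
  shows "\<exists>\<delta>>0. \<forall>x'\<in>MX. dX x' x < \<delta> \<longrightarrow> d (e x') (e x) < \<epsilon>"
  using continuous_map_e assms unfolding X.metric_continuous_map[OF K.Metric_space_axioms]
  by (metis X.commute K.commute)

lemma inverse_e_continuous_at:
  assumes x: "x \<in> MX" and "\<epsilon> > 0"
  shows "\<exists>\<delta>>0. \<forall>x'\<in>MX. d (e x') (e x) < \<delta> \<longrightarrow> dX x' x < \<epsilon>"
proof -
  have "openin (subtopology K.mtopology (M - P)) (e ` X.mball x \<epsilon>)"
    using homeomorphic_imp_open_map[OF homeomorphic_e] unfolding open_map_def by simp
  then obtain T where T: "openin K.mtopology T" "e ` X.mball x \<epsilon> = T \<inter> (M - P)"
    by (auto simp: openin_subtopology)
  have "e x \<in> T"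
    using T(2) x \<open>\<epsilon> > 0\<close> by auto
  then obtain r where r: "r > 0" "K.mball (e x) r \<subseteq> T"
    using T(1) K.openin_mtopology by meson
  have "dX x' x < \<epsilon>" if x': "x' \<in> MX" "d (e x') (e x) < r" for x'
  proof -
    have "e x' \<in> T \<inter> (M - P)"
      using r x x' e_in_M e_notin_P by (auto simp: K.commute)
    then obtain z where "z \<in> X.mball x \<epsilon>" "e x' = e z"
      using T(2) by (metis imageE)
    moreover have "z = x'"
      using calculation x' inj_e by (auto simp: inj_on_def)
    ultimately show ?thesis
      by (simp add: X.commute)
  qed
  with r show ?thesis
    by blast
qed

definition nearest :: "'b \<Rightarrow> 'a" where
  "nearest y = (SOME x. x \<in> MX \<and> (\<forall>x'\<in>MX. d y (e x) \<le> d y (e x')))"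

definition gap :: "'b \<Rightarrow> real" where
  "gap y = d y (e (nearest y))"

lemma nearest_exists:
  assumes "y \<in> M"
  shows "\<exists>x. x \<in> MX \<and> (\<forall>x'\<in>MX. d y (e x) \<le> d y (e x'))"
proof -
  have "continuous_map K.mtopology euclideanreal (d y)"
    using continuous_on_mdist[of y "metric (M,d)"] assms by simp
  then have "continuous_map X.mtopology euclideanreal (\<lambda>x. d y (e x))"
    using continuous_map_compose[OF continuous_map_e] by (simp add: o_def)
  then have "compact ((\<lambda>x. d y (e x)) ` MX)"
    using image_compactin compact_X unfolding compact_space_def by fastforce
  then show ?thesis
    using compact_attains_inf[of "(\<lambda>x. d y (e x)) ` MX"] nonempty_X by blast
qed

lemma nearest_in: "y \<in> M \<Longrightarrow> nearest y \<in> MX"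
  and gap_le: "y \<in> M \<Longrightarrow> x \<in> MX \<Longrightarrow> gap y \<le> d y (e x)"
  using someI_ex[OF nearest_exists] unfolding nearest_def[symmetric] gap_def by auto

lemma gap_e [simp]: "x \<in> MX \<Longrightarrow> gap (e x) = 0"
  using gap_le[of "e x" x] e_in_M by (simp add: gap_def antisym)

lemma nearest_e [simp]: "x \<in> MX \<Longrightarrow> nearest (e x) = x"
  using gap_e[of x] nearest_in[of "e x"] e_in_M inj_e by (auto simp: gap_def inj_on_def)

lemma e_nearest: "y \<in> M \<Longrightarrow> y \<notin> P \<Longrightarrow> e (nearest y) = y"
  using image_e by force

lemma gap_pos: "p \<in> P \<Longrightarrow> 0 < gap p"
  using P_subset nearest_in e_in_M e_notin_P by (force simp: gap_def)

lemma infinite_P_Int_mball: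
  assumes "x \<in> MX" "\<epsilon> > 0"
  shows "infinite (P \<inter> K.mball (e x) \<epsilon>)"
proof -
  have "e x \<in> K.mtopology derived_set_of P"
    using closure_P e_in_M e_notin_P assms(1) by (auto simp: closure_of)
  then show ?thesis
    using assms(2) by (simp add: K.derived_set_of_infinite_mball)
qed

lemma finite_gap_ge:
  assumes "\<epsilon> > 0"
  shows "finite {p\<in>P. \<epsilon> \<le> gap p}"
proof (rule ccontr)
  define S where "S = {p\<in>P. \<epsilon> \<le> gap p}"
  assume "infinite {p\<in>P. \<epsilon> \<le> gap p}"
  moreover have "S \<subseteq> M"
    using P_subset by (auto simp: S_def)
  ultimately obtain z where z: "z \<in> K.mtopology derived_set_of S"
    using compact_K K.compact_space_eq_Bolzano_Weierstrass by (auto simp: S_def)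
  then have "z \<in> M" and cluster: "infinite (S \<inter> K.mball z \<epsilon>)"
    using assms by (simp_all add: K.derived_set_of_infinite_mball)
  have "z \<notin> P"
  proof
    assume "z \<in> P"
    then have "openin K.mtopology {z}"
      by (rule peripheral_extension_openin_singleton[OF peripheral_extension])
    with z show False
      unfolding in_derived_set_of by blast
  qed
  then obtain x where x: "x \<in> MX" "z = e x"
    using image_e \<open>z \<in> M\<close> by (metis DiffI imageE)
  obtain y where y: "y \<in> S" "y \<in> K.mball z \<epsilon>"
    using cluster by (metis Int_iff finite.emptyI ex_in_conv)
  then have "gap y < \<epsilon>"
    using gap_le[of y x] x by (auto simp: K.commute)
  with y show False
    by (simp add: S_def)
qed

lemma nearest_continuous_at:
  assumes x: "x \<in> MX" and "\<epsilon> > 0"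
  shows "\<exists>\<delta>>0. \<forall>y\<in>M. d y (e x) < \<delta> \<longrightarrow> dX (nearest y) x < \<epsilon>"
proof -
  obtain \<delta> where \<delta>: "\<delta> > 0" "\<forall>x'\<in>MX. d (e x') (e x) < \<delta> \<longrightarrow> dX x' x < \<epsilon>"
    using inverse_e_continuous_at[OF assms] by blast
  have "dX (nearest y) x < \<epsilon>" if y: "y \<in> M" "d y (e x) < \<delta>/2" for y
  proof -
    have "d (e (nearest y)) (e x) \<le> d (e (nearest y)) y + d y (e x)"
      using K.triangle y nearest_in e_in_M x by blast
    also have "\<dots> \<le> 2 * d y (e x)"
      using gap_le[OF y(1) x] by (simp add: gap_def K.commute)
    finally show ?thesis
      using \<delta>(2) nearest_in[OF y(1)] y(2) by simp
  qed
  then show ?thesis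
    using \<delta>(1) by (intro exI[of _ "\<delta>/2"]) auto
qed

lemma near_if_nearest_near:
  assumes x: "x \<in> MX" and "\<epsilon> > 0"
  shows "\<exists>\<eta>>0. \<forall>y\<in>M. dX (nearest y) x < \<eta> \<and> gap y < \<eta> \<longrightarrow> d y (e x) < \<epsilon>"
proof -
  obtain \<delta> where \<delta>: "\<delta> > 0" "\<forall>x'\<in>MX. dX x' x < \<delta> \<longrightarrow> d (e x') (e x) < \<epsilon>/2"
    using e_continuous_at[OF x] \<open>\<epsilon> > 0\<close> half_gt_zero by blast
  have "d y (e x) < \<epsilon>"
    if y: "y \<in> M" "dX (nearest y) x < min \<delta> (\<epsilon>/2)" "gap y < min \<delta> (\<epsilon>/2)" for y
  proof -
    have "d y (e x) \<le> gap y + d (e (nearest y)) (e x)"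
      using K.triangle[of y "e (nearest y)" "e x"] y(1) nearest_in e_in_M x by (simp add: gap_def)
    moreover have "d (e (nearest y)) (e x) < \<epsilon>/2"
      using \<delta>(2) y nearest_in by auto
    ultimately show ?thesis
      using y(3) by linarith
  qed
  then show ?thesis
    using \<delta>(1) \<open>\<epsilon> > 0\<close> by (intro exI[of _ "min \<delta> (\<epsilon>/2)"]) auto
qed

lemma exists_peripheral_nearest_near:
  assumes x: "x \<in> MX" and "\<eta> > 0" and "finite F"
  shows "\<exists>q\<in>P - F. dX (nearest q) x < \<eta>"
proof -
  obtain \<delta> where \<delta>: "\<delta> > 0" "\<forall>y\<in>M. d y (e x) < \<delta> \<longrightarrow> dX (nearest y) x < \<eta>"
    using nearest_continuous_at[OF x \<open>\<eta> > 0\<close>] by blast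
  have "infinite (P \<inter> K.mball (e x) \<delta> - F)"
    using infinite_P_Int_mball[OF x \<delta>(1)] \<open>finite F\<close> by simp
  then obtain q where "q \<in> P - F" "q \<in> K.mball (e x) \<delta>"
    using infinite_imp_nonempty by blast
  with \<delta>(2) show ?thesis
    by (auto simp: K.commute)
qed

lemma bij_betw_nearest: "bij_betw nearest (M - P) MX"
  by (rule bij_betw_byWitness[where f'=e]) (use image_e e_nearest nearest_in in auto)

lemma bij_betw_e: "bij_betw e MX (M - P)"
  using inj_e image_e by (simp add: bij_betw_def)

end

lemma metric_peripheral_extension_of:
  assumes "Metric_space MX dX" "compact_space (Metric_space.mtopology MX dX)" "MX \<noteq> {}"
    and "peripheral_extension (Metric_space.mtopology MX dX) K P e"
  obtains M d where "K = Metric_space.mtopology M d" "metric_peripheral_extension M d MX dX P e"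
proof -
  obtain M d where "Metric_space M d" "K = Metric_space.mtopology M d"
    using assms(4) unfolding peripheral_extension_def metrizable_space_def by blast
  with assms show ?thesis
    using that by (simp add: metric_peripheral_extension_def metric_peripheral_extension_axioms_def)
qed

section \<open>Uniqueness\<close>

locale matched_peripheral_extensions =
  A: metric_peripheral_extension M1 d1 MX dX P1 e1 +
  B: metric_peripheral_extension M2 d2 MX dX P2 e2
  for M1 :: "'b set" and d1 and MX :: "'a set" and dX and P1 e1
    and M2 :: "'c set" and d2 and P2 e2 +
  fixes f :: "'b \<Rightarrow> 'c"
  assumes bij_f: "bij_betw f P1 P2"
    and matched: "\<And>p. p \<in> P1 \<Longrightarrow> dX (B.nearest (f p)) (A.nearest p) < max (A.gap p) (B.gap (f p))"
begin

definition h :: "'b \<Rightarrow> 'c" where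
  "h y = (if y \<in> P1 then f y else e2 (A.nearest y))"

lemma h_e1: "x \<in> MX \<Longrightarrow> h (e1 x) = e2 x"
  by (simp add: h_def A.e_notin_P)

lemma f_in_P2: "p \<in> P1 \<Longrightarrow> f p \<in> P2"
  using bij_f bij_betwE by blast

lemma bij_betw_h: "bij_betw h M1 M2"
proof -
  have "bij_betw h P1 P2"
    using bij_f by (rule bij_betw_cong[THEN iffD1, rotated]) (simp add: h_def)
  moreover have "bij_betw h (M1 - P1) (M2 - P2)"
    using bij_betw_trans[OF A.bij_betw_nearest B.bij_betw_e]
    by (rule bij_betw_cong[THEN iffD1, rotated]) (simp add: h_def)
  ultimately show ?thesis
    using bij_betw_combine[of h P1 P2 "M1 - P1" "M2 - P2"] A.P_subset B.P_subset
    by (simp add: Un_absorb1)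
qed

lemma h_in_M2: "y \<in> M1 \<Longrightarrow> h y \<in> M2"
  using bij_betw_h bij_betwE by blast

lemma finite_mismatch:
  assumes "\<eta> > 0"
  shows "finite {y\<in>M1. \<not> (dX (B.nearest (h y)) (A.nearest y) < \<eta> \<and> B.gap (h y) < \<eta>)}"
proof -
  have "finite (f ` {p\<in>P1. \<eta> \<le> B.gap (f p)})"
    using B.finite_gap_ge[OF assms] by (rule finite_subset[rotated]) (auto simp: f_in_P2)
  then have "finite {p\<in>P1. \<eta> \<le> B.gap (f p)}"
    using bij_f by (simp add: finite_image_iff bij_betw_def inj_on_subset[of f P1])
  moreover have "{y\<in>M1. \<not> (dX (B.nearest (h y)) (A.nearest y) < \<eta> \<and> B.gap (h y) < \<eta>)}
      \<subseteq> {p\<in>P1. \<eta> \<le> A.gap p} \<union> {p\<in>P1. \<eta> \<le> B.gap (f p)}"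
  proof
    fix y assume y: "y \<in> {y\<in>M1. \<not> (dX (B.nearest (h y)) (A.nearest y) < \<eta> \<and> B.gap (h y) < \<eta>)}"
    show "y \<in> {p\<in>P1. \<eta> \<le> A.gap p} \<union> {p\<in>P1. \<eta> \<le> B.gap (f p)}"
    proof (cases "y \<in> P1")
      case True
      then show ?thesis
        using y matched[of y] by (auto simp: h_def)
    next
      case False
      then show ?thesis
        using y assms A.nearest_in[of y] by (simp add: h_def)
    qed
  qed
  ultimately show ?thesis
    using A.finite_gap_ge[OF assms] by (meson finite_UnI finite_subset)
qed

lemma h_continuous_at_e1:
  assumes x0: "x0 \<in> MX" and "\<epsilon> > 0"
  shows "\<exists>\<delta>>0. \<forall>y\<in>M1. d1 (e1 x0) y < \<delta> \<longrightarrow> d2 (e2 x0) (h y) < \<epsilon>"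
proof -
  obtain \<eta> where \<eta>: "\<eta> > 0"
    "\<forall>z\<in>M2. dX (B.nearest z) x0 < \<eta> \<and> B.gap z < \<eta> \<longrightarrow> d2 z (e2 x0) < \<epsilon>"
    using B.near_if_nearest_near[OF assms] by blast
  obtain \<delta>0 where \<delta>0: "\<delta>0 > 0"
    "\<forall>y\<in>M1. d1 y (e1 x0) < \<delta>0 \<longrightarrow> dX (A.nearest y) x0 < \<eta>/2"
    using A.nearest_continuous_at[OF x0, of "\<eta>/2"] \<eta>(1) by auto
  define F where "F = {y\<in>M1. \<not> (dX (B.nearest (h y)) (A.nearest y) < \<eta>/2 \<and> B.gap (h y) < \<eta>/2)}"
  have "e1 x0 \<notin> F"
    using x0 \<eta>(1) by (simp add: F_def h_e1)
  then obtain \<delta>1 where \<delta>1: "\<delta>1 > 0" "A.K.mball (e1 x0) \<delta>1 \<inter> F = {}"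
    using A.K.mball_disjoint_finite finite_mismatch[of "\<eta>/2"] \<eta>(1) A.e_in_M[OF x0]
    by (metis F_def half_gt_zero)
  have "d2 (e2 x0) (h y) < \<epsilon>" if y: "y \<in> M1" "d1 (e1 x0) y < min \<delta>0 \<delta>1" for y
  proof -
    have "y \<notin> F"
      using \<delta>1(2) y A.e_in_M[OF x0] by auto
    then have "dX (B.nearest (h y)) (A.nearest y) < \<eta>/2" "B.gap (h y) < \<eta>/2"
      using y(1) by (auto simp: F_def)
    moreover have "dX (A.nearest y) x0 < \<eta>/2"
      using \<delta>0(2) y by (simp add: A.K.commute)
    moreover have "dX (B.nearest (h y)) x0 \<le> dX (B.nearest (h y)) (A.nearest y) + dX (A.nearest y) x0"
      using A.X.triangle B.nearest_in[OF h_in_M2] A.nearest_in y(1) x0 by blast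
    ultimately have "dX (B.nearest (h y)) x0 < \<eta>" "B.gap (h y) < \<eta>"
      using \<eta>(1) by linarith+
    then show ?thesis
      using \<eta>(2) h_in_M2[OF y(1)] B.K.commute by metis
  qed
  then show ?thesis
    using \<delta>0(1) \<delta>1(1) by (intro exI[of _ "min \<delta>0 \<delta>1"]) auto
qed

lemma continuous_map_h: "continuous_map A.K.mtopology B.K.mtopology h"
  unfolding A.K.metric_continuous_map[OF B.K.Metric_space_axioms]
proof (intro conjI ballI allI impI)
  show "h ` M1 \<subseteq> M2"
    using h_in_M2 by blast
  fix a and \<epsilon> :: real
  assume a: "a \<in> M1" and "\<epsilon> > 0"
  show "\<exists>\<delta>>0. \<forall>y. y \<in> M1 \<and> d1 a y < \<delta> \<longrightarrow> d2 (h a) (h y) < \<epsilon>"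
  proof (cases "a \<in> P1")
    case True
    then have "openin A.K.mtopology {a}"
      by (rule peripheral_extension_openin_singleton[OF A.peripheral_extension])
    then obtain r where "r > 0" "A.K.mball a r \<subseteq> {a}"
      unfolding A.K.openin_mtopology by blast
    then show ?thesis
      using a \<open>\<epsilon> > 0\<close> h_in_M2 by (intro exI[of _ r]) auto
  next
    case False
    then obtain x0 where "x0 \<in> MX" "a = e1 x0"
      using A.image_e a by (metis DiffI imageE)
    then show ?thesis
      using h_continuous_at_e1[of x0 \<epsilon>] \<open>\<epsilon> > 0\<close> h_e1 by auto
  qed
qed

lemma homeomorphic_map_h: "homeomorphic_map A.K.mtopology B.K.mtopology h"
  using continuous_imp_homeomorphic_map[OF continuous_map_h A.compact_K B.K.Hausdorff_space_mtopology]
    bij_betw_h by (simp add: bij_betw_def)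

end

theorem metric_peripheral_extensions_homeomorphic:
  assumes "metric_peripheral_extension M1 d1 MX dX P1 e1"
    and "metric_peripheral_extension M2 d2 MX dX P2 e2"
  shows "\<exists>h. homeomorphic_map (Metric_space.mtopology M1 d1) (Metric_space.mtopology M2 d2) h
    \<and> (\<forall>x\<in>MX. h (e1 x) = e2 x)"
proof -
  interpret A: metric_peripheral_extension M1 d1 MX dX P1 e1 by fact
  interpret B: metric_peripheral_extension M2 d2 MX dX P2 e2 by fact
  define matched where
    "matched p q \<longleftrightarrow> dX (B.nearest q) (A.nearest p) < max (A.gap p) (B.gap q)" for p q
  have forward: "\<exists>q\<in>P2 - F. matched p q" if "p \<in> P1" "finite F" for p F
    using B.exists_peripheral_nearest_near[OF A.nearest_in A.gap_pos] that A.P_subset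
    by (force simp: matched_def less_max_iff_disj)
  have backward: "\<exists>p\<in>P1 - F. matched p q" if "q \<in> P2" "finite F" for q F
    using A.exists_peripheral_nearest_near[OF B.nearest_in B.gap_pos] that B.P_subset
    by (force simp: matched_def less_max_iff_disj A.X.commute)
  have "P1 \<noteq> {}" "P2 \<noteq> {}"
    using A.infinite_P B.infinite_P by auto
  then obtain f where "bij_betw f P1 P2" "\<And>p. p \<in> P1 \<Longrightarrow> matched p (f p)"
    using back_and_forth[OF A.countable_P B.countable_P _ _ forward backward] by blast
  then interpret matched_peripheral_extensions M1 d1 MX dX P1 e1 M2 d2 P2 e2 f
    by unfold_locales (simp_all add: matched_def)
  show ?thesis
    using homeomorphic_map_h h_e1 by blast
qed

theorem peripheral_extensions_homeomorphic:
  assumes "metrizable_space X" "compact_space X" "topspace X \<noteq> {}"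
    and "peripheral_extension X K1 P1 e1" "peripheral_extension X K2 P2 e2"
  shows "\<exists>h. homeomorphic_map K1 K2 h \<and> (\<forall>x\<in>topspace X. h (e1 x) = e2 x)"
proof -
  obtain MX dX where "Metric_space MX dX" and X: "X = Metric_space.mtopology MX dX"
    using assms(1) unfolding metrizable_space_def by blast
  moreover have "MX \<noteq> {}"
    using assms(3) X Metric_space.topspace_mtopology[OF \<open>Metric_space MX dX\<close>] by simp
  ultimately obtain M1 d1 M2 d2 where
    "K1 = Metric_space.mtopology M1 d1" "metric_peripheral_extension M1 d1 MX dX P1 e1"
    "K2 = Metric_space.mtopology M2 d2" "metric_peripheral_extension M2 d2 MX dX P2 e2"
    using metric_peripheral_extension_of assms(2,4,5) by metis
  then show ?thesis
    using metric_peripheral_extensions_homeomorphic X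
      Metric_space.topspace_mtopology[OF \<open>Metric_space MX dX\<close>] by simp
qed

section \<open>Existence\<close>

text \<open>The peripheral point \<open>Inr n\<close> hovers above the point \<open>s n\<close> of X at height \<open>1/(n+1)\<close>.\<close>

definition peripheral_foot :: "(nat \<Rightarrow> 'a) \<Rightarrow> 'a + nat \<Rightarrow> 'a" where
  "peripheral_foot s = case_sum id s"

definition peripheral_height :: "'a + nat \<Rightarrow> real" where
  "peripheral_height = case_sum (\<lambda>_. 0) (\<lambda>n. 1 / (real n + 1))"

definition peripheral_dist ::
  "('a \<Rightarrow> 'a \<Rightarrow> real) \<Rightarrow> (nat \<Rightarrow> 'a) \<Rightarrow> 'a + nat \<Rightarrow> 'a + nat \<Rightarrow> real" where
  "peripheral_dist dX s u v = (if u = v then 0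
     else dX (peripheral_foot s u) (peripheral_foot s v) + peripheral_height u + peripheral_height v)"

lemma peripheral_height_nonneg: "0 \<le> peripheral_height u"
  by (cases u) (simp_all add: peripheral_height_def)

lemma peripheral_height_eq_0_iff: "peripheral_height u = 0 \<longleftrightarrow> isl u"
  by (cases u) (simp_all add: peripheral_height_def)

lemma Metric_space_peripheral_dist:
  assumes "Metric_space MX dX" "\<And>n. s n \<in> MX"
  shows "Metric_space (Inl ` MX \<union> range Inr) (peripheral_dist dX s)"
proof -
  interpret X: Metric_space MX dX by fact
  have foot_in: "u \<in> Inl ` MX \<union> range Inr \<Longrightarrow> peripheral_foot s u \<in> MX" for u
    using assms(2) by (auto simp: peripheral_foot_def)
  show ?thesis
  proof
    fix u v :: "'a + nat"
    show "0 \<le> peripheral_dist dX s u v"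
      using peripheral_height_nonneg[of u] peripheral_height_nonneg[of v]
      by (simp add: peripheral_dist_def)
    show "peripheral_dist dX s u v = peripheral_dist dX s v u"
      by (simp add: peripheral_dist_def X.commute)
    assume uv: "u \<in> Inl ` MX \<union> range Inr" "v \<in> Inl ` MX \<union> range Inr"
    show "peripheral_dist dX s u v = 0 \<longleftrightarrow> u = v"
    proof
      assume zero: "peripheral_dist dX s u v = 0"
      show "u = v"
      proof (rule ccontr)
        assume "u \<noteq> v"
        then have "dX (peripheral_foot s u) (peripheral_foot s v) = 0"
          and "peripheral_height u = 0" "peripheral_height v = 0"
          using zero peripheral_height_nonneg[of u] peripheral_height_nonneg[of v]
          by (simp_all add: peripheral_dist_def add_nonneg_eq_0_iff)
        with uv \<open>u \<noteq> v\<close> show False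
          by (auto simp: peripheral_height_eq_0_iff peripheral_foot_def)
      qed
    qed (simp add: peripheral_dist_def)
  next
    fix u v w :: "'a + nat"
    assume uvw: "u \<in> Inl ` MX \<union> range Inr" "v \<in> Inl ` MX \<union> range Inr" "w \<in> Inl ` MX \<union> range Inr"
    have "dX (peripheral_foot s u) (peripheral_foot s w)
        \<le> dX (peripheral_foot s u) (peripheral_foot s v) + dX (peripheral_foot s v) (peripheral_foot s w)"
      using X.triangle foot_in uvw by blast
    then show "peripheral_dist dX s u w \<le> peripheral_dist dX s u v + peripheral_dist dX s v w"
      using peripheral_height_nonneg[of u] peripheral_height_nonneg[of v] peripheral_height_nonneg[of w]
        X.nonneg[of "peripheral_foot s u" "peripheral_foot s v"]
        X.nonneg[of "peripheral_foot s v" "peripheral_foot s w"]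
      by (simp add: peripheral_dist_def)
  qed
qed

locale peripheral_construction = X: Metric_space MX dX
  for MX :: "'a set" and dX +
  fixes s :: "nat \<Rightarrow> 'a"
  assumes s_in: "\<And>n. s n \<in> MX"
    and s_cluster: "\<And>x \<epsilon> N. x \<in> MX \<Longrightarrow> \<epsilon> > 0 \<Longrightarrow> \<exists>n\<ge>N. dX x (s n) < \<epsilon>"
    and compact_X: "compact_space X.mtopology"
begin

sublocale K: Metric_space "Inl ` MX \<union> range Inr" "peripheral_dist dX s"
  using Metric_space_peripheral_dist[OF X.Metric_space_axioms s_in] .

lemma dist_Inl_Inl: "x \<in> MX \<Longrightarrow> y \<in> MX \<Longrightarrow> peripheral_dist dX s (Inl x) (Inl y) = dX x y"
  by (auto simp: peripheral_dist_def peripheral_foot_def peripheral_height_def)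

lemma dist_Inl_Inr: "peripheral_dist dX s (Inl x) (Inr n) = dX x (s n) + 1 / (real n + 1)"
  by (simp add: peripheral_dist_def peripheral_foot_def peripheral_height_def)

lemma peripheral_height_le_dist_Inr:
  assumes "v \<in> Inl ` MX \<union> range Inr" "v \<noteq> Inr n"
  shows "1 / (real n + 1) \<le> peripheral_dist dX s (Inr n) v"
proof -
  have "peripheral_foot s v \<in> MX"
    using assms(1) s_in by (auto simp: peripheral_foot_def)
  then show ?thesis
    using assms(2) peripheral_height_nonneg[of v] s_in[of n] by (simp add: peripheral_dist_def peripheral_height_def peripheral_foot_def)
qed

lemma openin_Inr: "openin K.mtopology {Inr n}"
proof -
  have "K.mball (Inr n) (1 / (real n + 1)) \<subseteq> {Inr n}"
  proof
    fix v assume "v \<in> K.mball (Inr n) (1 / (real n + 1))"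
    then have "v \<in> Inl ` MX \<union> range Inr" "peripheral_dist dX s (Inr n) v < 1 / (real n + 1)"
      by simp_all
    then show "v \<in> {Inr n}"
      using peripheral_height_le_dist_Inr[of v n] by fastforce
  qed
  moreover have "{Inr n} \<subseteq> Inl ` MX \<union> range Inr" "1 / (real n + 1) > 0"
    by simp_all
  ultimately show ?thesis
    unfolding K.openin_mtopology by blast
qed

lemma openin_range_Inr: "openin K.mtopology (range Inr)"
proof -
  have "openin K.mtopology (\<Union>n. {Inr n})"
    by (rule openin_Union) (auto simp: openin_Inr)
  also have "(\<Union>n. {Inr n}) = range Inr"
    by auto
  finally show ?thesis .
qed

lemma subtopology_range_Inr: "subtopology K.mtopology (range Inr) = discrete_topology (range Inr)"
proof -
  have "openin (subtopology K.mtopology (range Inr)) {Inr n}" for n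
    using openin_subtopology_Int2[OF openin_Inr, of "range Inr" n] by simp
  then have "discrete_topology (range Inr) = subtopology K.mtopology (range Inr)"
    unfolding discrete_topology_unique by auto
  then show ?thesis
    by simp
qed

lemma closure_range_Inr: "K.mtopology closure_of range Inr = Inl ` MX \<union> range Inr"
proof -
  have "Inl x \<in> K.mtopology closure_of range Inr" if x: "x \<in> MX" for x
    unfolding K.metric_closure_of
  proof (intro CollectI conjI allI impI)
    show "Inl x \<in> Inl ` MX \<union> range Inr"
      using x by simp
    fix r :: real assume "r > 0"
    then obtain N where N: "\<And>n. n \<ge> N \<Longrightarrow> 1 / (real n + 1) < r/2"
      using inverse_Suc_eventually_less half_gt_zero by blast
    obtain n where "n \<ge> N" "dX x (s n) < r/2"
      using s_cluster[OF x, of "r/2" N] \<open>r > 0\<close> by auto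
    with N have "Inr n \<in> K.mball (Inl x) r"
      using x by (force simp: dist_Inl_Inr)
    then show "\<exists>y\<in>range Inr. y \<in> K.mball (Inl x) r"
      by blast
  qed
  moreover have "range Inr \<subseteq> K.mtopology closure_of range Inr"
    by (rule closure_of_subset) auto
  ultimately have "Inl ` MX \<union> range Inr \<subseteq> K.mtopology closure_of range Inr"
    by blast
  then show ?thesis
    using closure_of_subset_topspace[of K.mtopology "range Inr"] by (metis K.topspace_mtopology subset_antisym)
qed

lemma homeomorphic_map_Inl:
  "homeomorphic_map X.mtopology (subtopology K.mtopology (topspace K.mtopology - range Inr)) Inl"
proof -
  interpret sub: Submetric "Inl ` MX \<union> range Inr" "peripheral_dist dX s" "Inl ` MX"
    by unfold_locales auto
  interpret Metric_space12 MX dX "Inl ` MX" "peripheral_dist dX s"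
    by unfold_locales
  have "topspace K.mtopology - range Inr = Inl ` MX"
    by auto
  then show ?thesis
    using isometry_imp_homeomorphic_map[of Inl] sub.mtopology_submetric dist_Inl_Inl by simp
qed

lemma compact_space_K: "compact_space K.mtopology"
proof (rule compact_space_if_compactin_cofinite)
  have "continuous_map X.mtopology K.mtopology Inl"
    using homeomorphic_imp_continuous_map[OF homeomorphic_map_Inl] continuous_map_in_subtopology
    by blast
  then show compact: "compactin K.mtopology (Inl ` MX)"
    using image_compactin compact_X unfolding compact_space_def by fastforce
  fix U assume U: "openin K.mtopology U" "Inl ` MX \<subseteq> U"
  obtain \<epsilon> where \<epsilon>: "\<epsilon> > 0" "\<forall>z\<in>Inl ` MX. K.mball z \<epsilon> \<subseteq> U"
    using K.lebesgue_number[OF compact, of "{U}"] U by auto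
  obtain N where N: "\<And>n. n \<ge> N \<Longrightarrow> 1 / (real n + 1) < \<epsilon>"
    using inverse_Suc_eventually_less \<epsilon>(1) by blast
  have Inr_in_U: "Inr n \<in> U" if "n \<ge> N" for n
  proof -
    have "Inr n \<in> K.mball (Inl (s n)) \<epsilon>"
      using N[OF that] s_in[of n] by (simp add: dist_Inl_Inr)
    then show ?thesis
      using \<epsilon>(2) s_in[of n] by blast
  qed
  have "topspace K.mtopology - U \<subseteq> Inr ` {..<N}"
  proof
    fix u assume u: "u \<in> topspace K.mtopology - U"
    then obtain n where n: "u = Inr n"
      using U(2) by auto
    then have "n < N"
      using u Inr_in_U not_le by blast
    with n show "u \<in> Inr ` {..<N}"
      by simp
  qed
  then show "finite (topspace K.mtopology - U)"
    by (rule finite_subset) simp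
qed

theorem peripheral_extension_construction:
  "peripheral_extension X.mtopology K.mtopology (range Inr) Inl"
  unfolding peripheral_extension_def
  using K.metrizable_space_mtopology compact_space_K openin_range_Inr subtopology_range_Inr
    closure_range_Inr homeomorphic_map_Inl
  by (simp add: range_inj_infinite)

end

theorem peripheral_extension_exists:
  fixes X :: "'a topology"
  assumes "metrizable_space X" "compact_space X" "topspace X \<noteq> {}"
  shows "\<exists>(K :: ('a + nat) topology) P e. peripheral_extension X K P e"
proof -
  obtain MX dX where "Metric_space MX dX" and X: "X = Metric_space.mtopology MX dX"
    using assms(1) unfolding metrizable_space_def by blast
  interpret X: Metric_space MX dX by fact
  have "MX \<noteq> {}"
    using assms(3) X by simp
  then obtain s :: "nat \<Rightarrow> 'a"
    where "\<And>n. s n \<in> MX" "\<And>x \<epsilon> N. x \<in> MX \<Longrightarrow> \<epsilon> > 0 \<Longrightarrow> \<exists>n\<ge>N. dX x (s n) < \<epsilon>"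
    using X.compact_space_imp_cluster_sequence assms(2) X by blast
  then interpret peripheral_construction MX dX s
    using assms(2) X by unfold_locales auto
  show ?thesis
    using peripheral_extension_construction X by blast
qed

theorem lemma1p1:
  fixes X :: "'a topology"
  assumes "metrizable_space X" and "compact_space X" and "topspace X \<noteq> {}"
  shows "(\<exists>(K :: ('a + nat) topology) P e. peripheral_extension X K P e)
    \<and> (\<forall>(K1 :: 'b topology) P1 e1 (K2 :: 'c topology) P2 e2.
          peripheral_extension X K1 P1 e1 \<and> peripheral_extension X K2 P2 e2 \<longrightarrow>
          (\<exists>h. homeomorphic_map K1 K2 h \<and> (\<forall>x\<in>topspace X. h (e1 x) = e2 x)))
    \<and> (\<forall>(K :: 'b topology) P e. peripheral_extension X K P e \<longrightarrow>
          (\<forall>p\<in>P. \<forall>q\<in>P. \<exists>h. homeomorphic_map K K h \<and>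
              (\<forall>x\<in>topspace X. h (e x) = e x) \<and> h p = q))"
proof (intro conjI allI impI ballI)
  show "\<exists>(K :: ('a + nat) topology) P e. peripheral_extension X K P e"
    by (rule peripheral_extension_exists[OF assms])
next
  fix K1 :: "'b topology" and P1 e1 and K2 :: "'c topology" and P2 e2
  assume "peripheral_extension X K1 P1 e1 \<and> peripheral_extension X K2 P2 e2"
  then show "\<exists>h. homeomorphic_map K1 K2 h \<and> (\<forall>x\<in>topspace X. h (e1 x) = e2 x)"
    using peripheral_extensions_homeomorphic[OF assms] by blast
next
  fix K :: "'b topology" and P e p q
  assume "peripheral_extension X K P e" "p \<in> P" "q \<in> P"
  then show "\<exists>h. homeomorphic_map K K h \<and> (\<forall>x\<in>topspace X. h (e x) = e x) \<and> h p = q"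
    by (rule peripheral_extension_transitive)
qed

end
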